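(* Let $k\ge2$, $n$ be integers, $c\ge0$, and let numbers $b_{\ell,r}$, for $k<\ell\le n+1$ and $r\in\{0,\dots,k\}$, satisfy $b_{n+1,r}=0$, $b_{\ell,0}=0$, and for $k<\ell\le n$, $r\ge1$: $$b_{\ell,r}=\sum_{j=\ell}^{n}\left(\frac{\ell-k}{j-k}\right)^k\left(\frac{k-1}{j+1}\,b_{j+1,r-1}+\frac{c}{n}\right).$$ Then for all $\ell$ with $k^2+k\le\ell\le n$ and all $r\in\{0,\dots,k\}$, $$b_{\ell,r}\ \ge\ \left(\frac{r(\ell-k)}{(k-1)n}-\frac{1}{k-1}\left(\frac{\ell-k}{n-k}\right)^k\sum_{r'=0}^{r-1}\sum_{i=0}^{r'}\frac{(k-1)^i}{i!}\ln^i\!\left(\frac{n}{\ell}\right)-\frac{3k^2r}{(k-1)n}\right)c.$$ *)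

theory Defs
  imports Complex_Main
begin

end

theory Submission
  imports Defs
begin

text \<open>
  Write \<open>F r l\<close> (\<open>lower_bound\<close> below) for the bracket in the claimed bound. Since \<open>c \<ge> 0\<close>
  and the weights \<open>((l - k) / (j - k))\<^sup>k\<close> are nonnegative, induction on \<open>r\<close> reduces the
  theorem to showing that \<open>F\<close> is a subsolution of the recursion:
  \<open>F (r + 1) l \<le> \<Sum>j=l..n. ((l - k) / (j - k))\<^sup>k ((k - 1) / (j + 1) F r (j + 1) + 1 / n)\<close>,
  with \<open>F r (n + 1)\<close> read as \<open>0\<close>.

  The logarithmic part of \<open>F\<close> is \<open>E\<^sub>r((k - 1) ln (n / l))\<close>, where
  \<open>E\<^sub>r(t) = \<Sum>r'<r. \<Sum>i\<le>r'. t\<^sup>i / i!\<close> satisfies \<open>(a - b) E\<^sub>r(b) \<le> E\<^sub>r\<^sub>+\<^sub>1(a) - E\<^sub>r\<^sub>+\<^sub>1(b)\<close> for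
  \<open>0 \<le> b \<le> a\<close>. As \<open>ln (n / j) - ln (n / (j + 1)) \<ge> 1 / (j + 1)\<close>, the logarithmic terms on the
  right telescope over \<open>j\<close> to \<open>E\<^sub>r\<^sub>+\<^sub>1((k - 1) ln (n / l)) - (r + 1)\<close>, up to the factor
  \<open>((j + 1 - k) / (j - k))\<^sup>k \<le> 1 + k / (j + 1 - 2k)\<close>. The linear part is handled by comparing
  \<open>\<Sum>j ((l - k) / (j - k))\<^sup>k\<close> with the corresponding integral. Every remaining error is
  \<open>O(k\<^sup>2 / n)\<close> per unit of \<open>r\<close> once \<open>l \<ge> k\<^sup>2 + k\<close>, and is absorbed by \<open>3 k\<^sup>2 r / ((k - 1) n)\<close>.
\<close>

definition exp_partial :: "nat \<Rightarrow> real \<Rightarrow> real" where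
  "exp_partial p t = (\<Sum>i\<le>p. t ^ i / fact i)"

definition exp_partial_sum :: "nat \<Rightarrow> real \<Rightarrow> real" where
  "exp_partial_sum r t = (\<Sum>p<r. exp_partial p t)"

lemma power_Suc_diff_ge:
  fixes a b :: real
  assumes "0 \<le> b" "b \<le> a"
  shows "real (Suc i) * b ^ i * (a - b) \<le> a ^ Suc i - b ^ Suc i"
proof (induction i)
  case (Suc i)
  have "a ^ Suc (Suc i) - b ^ Suc (Suc i) = a * (a ^ Suc i - b ^ Suc i) + b ^ Suc i * (a - b)"
    by (simp add: algebra_simps)
  also have "\<dots> \<ge> a * (real (Suc i) * b ^ i * (a - b)) + b ^ Suc i * (a - b)"
    using Suc assms by (intro add_right_mono mult_left_mono) auto
  moreover have "a * (real (Suc i) * b ^ i * (a - b)) \<ge> b * (real (Suc i) * b ^ i * (a - b))"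
    using assms by (intro mult_right_mono) auto
  ultimately show ?case by (simp add: algebra_simps)
qed simp

lemma exp_partial_0_left [simp]: "exp_partial 0 t = 1"
  by (simp add: exp_partial_def)

lemma exp_partial_0_right [simp]: "exp_partial p 0 = 1"
  unfolding exp_partial_def by (induction p) auto

lemma exp_partial_nonneg: "0 \<le> t \<Longrightarrow> 0 \<le> exp_partial p t"
  unfolding exp_partial_def by (intro sum_nonneg) auto

lemma exp_partial_le_exp:
  assumes "0 \<le> t" shows "exp_partial p t \<le> exp t"
  unfolding exp_partial_def exp_def
  using assms summable_exp_generic[of t]
  by (auto simp: divide_inverse ac_simps intro!: sum_le_suminf)

lemma exp_partial_Suc_eq: "exp_partial (Suc p) t = 1 + (\<Sum>i\<le>p. t ^ Suc i / fact (Suc i))"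
  unfolding exp_partial_def by (subst sum.atMost_Suc_shift) simp

text \<open>A mean value inequality: \<open>exp_partial p\<close> is the derivative of \<open>exp_partial (Suc p)\<close>
  and is increasing on \<open>[0, \<infinity>)\<close>.\<close>
lemma exp_partial_Suc_diff_ge:
  assumes "0 \<le> b" "b \<le> a"
  shows "exp_partial p b * (a - b) \<le> exp_partial (Suc p) a - exp_partial (Suc p) b"
proof -
  have term_le: "b ^ i * (a - b) / fact i \<le> (a ^ Suc i - b ^ Suc i) / fact (Suc i)" for i
  proof -
    have "b ^ i * (a - b) / fact i = real (Suc i) * b ^ i * (a - b) / fact (Suc i)"
      by (simp only: fact_Suc mult.assoc mult_divide_mult_cancel_left_if) simp
    also have "\<dots> \<le> (a ^ Suc i - b ^ Suc i) / fact (Suc i)"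
      using power_Suc_diff_ge[OF assms] by (intro divide_right_mono) auto
    finally show ?thesis .
  qed
  have "exp_partial p b * (a - b) = (\<Sum>i\<le>p. b ^ i * (a - b) / fact i)"
    unfolding exp_partial_def by (simp add: sum_distrib_right)
  also have "\<dots> \<le> (\<Sum>i\<le>p. (a ^ Suc i - b ^ Suc i) / fact (Suc i))"
    by (intro sum_mono term_le)
  also have "\<dots> = exp_partial (Suc p) a - exp_partial (Suc p) b"
    unfolding exp_partial_Suc_eq by (simp add: sum_subtractf diff_divide_distrib)
  finally show ?thesis .
qed

lemma exp_partial_sum_0_right [simp]: "exp_partial_sum r 0 = real r"
  by (simp add: exp_partial_sum_def)

lemma exp_partial_sum_nonneg: "0 \<le> t \<Longrightarrow> 0 \<le> exp_partial_sum r t"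
  unfolding exp_partial_sum_def by (intro sum_nonneg exp_partial_nonneg)

lemma exp_partial_sum_le: "0 \<le> t \<Longrightarrow> exp_partial_sum r t \<le> real r * exp t"
  using sum_mono[of "{..<r}" "\<lambda>p. exp_partial p t" "\<lambda>_. exp t"] exp_partial_le_exp
  by (simp add: exp_partial_sum_def)

lemma exp_partial_sum_Suc_diff_ge:
  assumes "0 \<le> b" "b \<le> a"
  shows "(a - b) * exp_partial_sum r b \<le> exp_partial_sum (Suc r) a - exp_partial_sum (Suc r) b"
proof -
  have shift: "exp_partial_sum (Suc r) t = 1 + (\<Sum>p<r. exp_partial (Suc p) t)" for t
    unfolding exp_partial_sum_def by (subst sum.lessThan_Suc_shift) simp
  have "(a - b) * exp_partial_sum r b = (\<Sum>p<r. exp_partial p b * (a - b))"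
    unfolding exp_partial_sum_def by (simp add: sum_distrib_left mult.commute)
  also have "\<dots> \<le> (\<Sum>p<r. exp_partial (Suc p) a - exp_partial (Suc p) b)"
    using assms by (intro sum_mono exp_partial_Suc_diff_ge)
  also have "\<dots> = exp_partial_sum (Suc r) a - exp_partial_sum (Suc r) b"
    unfolding shift by (simp add: sum_subtractf)
  finally show ?thesis .
qed

lemma exp_partial_sum_mult_eq:
  "exp_partial_sum r (a * t) = (\<Sum>p<r. \<Sum>i = 0..p. a ^ i / fact i * t ^ i)"
  unfolding exp_partial_sum_def exp_partial_def by (simp add: power_mult_distrib atLeast0AtMost)

lemma exp_partial_sum_ln_step:
  fixes c :: real
  assumes "0 \<le> c" "0 < j" "j < n"
  shows "c / (real j + 1) * exp_partial_sum r (c * ln (real n / (real j + 1)))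
     \<le> exp_partial_sum (Suc r) (c * ln (real n / real j))
         - exp_partial_sum (Suc r) (c * ln (real n / (real j + 1)))"
proof -
  define a b where "a = c * ln (real n / real j)" and "b = c * ln (real n / (real j + 1))"
  have "ln (real j / (real j + 1)) \<le> real j / (real j + 1) - 1"
    using assms by (intro ln_le_minus_one) auto
  then have "1 / (real j + 1) \<le> ln (real n / real j) - ln (real n / (real j + 1))"
    using assms by (simp add: ln_div field_simps)
  then have ab: "c / (real j + 1) \<le> a - b"
    using mult_left_mono[OF _ assms(1)] by (fastforce simp: a_def b_def algebra_simps)
  have b: "0 \<le> b"
    using assms by (simp add: b_def)
  have "c / (real j + 1) * exp_partial_sum r b \<le> (a - b) * exp_partial_sum r b"
    using ab exp_partial_sum_nonneg[OF b] by (rule mult_right_mono)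
  also have "\<dots> \<le> exp_partial_sum (Suc r) a - exp_partial_sum (Suc r) b"
  proof (rule exp_partial_sum_Suc_diff_ge[OF b])
    have "0 \<le> c / (real j + 1)" using assms by simp
    then show "b \<le> a" using ab by linarith
  qed
  finally show ?thesis by (simp add: a_def b_def)
qed

lemma exp_partial_sum_ln_ratio_le:
  fixes s J n :: real
  assumes "0 \<le> s" "s < J" "J \<le> n"
  shows "exp_partial_sum r (real p * ln (n / J)) \<le> real r * ((n - s) / (J - s)) ^ p"
proof -
  have "exp_partial_sum r (real p * ln (n / J)) \<le> real r * (n / J) ^ p"
    using exp_partial_sum_le[of "real p * ln (n / J)" r] assms by (simp add: exp_of_nat_mult)
  also have "\<dots> \<le> real r * ((n - s) / (J - s)) ^ p"
  proof -
    have "n * (J - s) \<le> (n - s) * J"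
      using assms mult_left_mono[of J n s] by (simp add: algebra_simps)
    then have "n / J \<le> (n - s) / (J - s)"
      using assms by (simp add: divide_simps)
    then show ?thesis
      using assms by (intro mult_left_mono power_mono) auto
  qed
  finally show ?thesis .
qed

lemma sum_telescope_Suc:
  fixes g :: "nat \<Rightarrow> 'a::ab_group_add"
  assumes "l \<le> Suc n"
  shows "(\<Sum>j=l..n. g j - g (Suc j)) = g l - g (Suc n)"
  using sum_Suc_diff[OF assms, of "\<lambda>j. - g j"] by (simp add: algebra_simps)

lemma inverse_power_diff_le:
  fixes x :: real
  assumes "0 < x"
  shows "1 / x ^ p - 1 / (x + 1) ^ p \<le> real p / x ^ Suc p"
proof -
  have "1 + real p * (- 1 / (x + 1)) \<le> (1 + (- 1 / (x + 1))) ^ p"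
    using assms by (intro Bernoulli_inequality) (simp add: field_simps)
  also have "1 + (- 1 / (x + 1)) = x / (x + 1)"
    using assms by (simp add: field_simps)
  finally have Bernoulli: "1 - real p / (x + 1) \<le> (x / (x + 1)) ^ p" by simp
  have "1 / x ^ p - 1 / (x + 1) ^ p = (1 / x ^ p) * (1 - (x / (x + 1)) ^ p)"
    using assms by (simp add: power_divide field_simps)
  also have "\<dots> \<le> (1 / x ^ p) * (real p / (x + 1))"
    using Bernoulli assms by (intro mult_left_mono) auto
  also have "\<dots> \<le> (1 / x ^ p) * (real p / x)"
    using assms by (intro mult_left_mono divide_left_mono) auto
  finally show ?thesis by (simp add: mult.commute)
qed

lemma inverse_power_diff_ge:
  fixes x :: real
  assumes "0 < x"
  shows "real p / (x + 1) ^ Suc p \<le> 1 / x ^ p - 1 / (x + 1) ^ p"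
proof -
  have "1 + real p * (1 / x) \<le> (1 + 1 / x) ^ p"
    using assms by (intro Bernoulli_inequality) (simp add: field_simps)
  also have "1 + 1 / x = (x + 1) / x"
    using assms by (simp add: field_simps)
  finally have Bernoulli: "1 + real p / x \<le> ((x + 1) / x) ^ p" by simp
  have "real p / (x + 1) ^ Suc p = (1 / (x + 1) ^ p) * (real p / (x + 1))" by simp
  also have "\<dots> \<le> (1 / (x + 1) ^ p) * (real p / x)"
    using assms by (intro mult_left_mono divide_left_mono) auto
  also have "\<dots> \<le> (1 / (x + 1) ^ p) * (((x + 1) / x) ^ p - 1)"
    using Bernoulli assms by (intro mult_left_mono) auto
  also have "\<dots> = 1 / x ^ p - 1 / (x + 1) ^ p"
    using assms by (simp add: power_divide field_simps add_pos_pos)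
  finally show ?thesis .
qed

lemma add_one_div_power_le:
  fixes x :: real
  assumes "0 < x" "real k < x + 1"
  shows "((x + 1) / x) ^ k \<le> 1 + real k / (x + 1 - real k)"
proof -
  have "1 + real k * (- 1 / (x + 1)) \<le> (1 + (- 1 / (x + 1))) ^ k"
    using assms by (intro Bernoulli_inequality) (simp add: field_simps)
  also have "1 + (- 1 / (x + 1)) = x / (x + 1)"
    using assms by (simp add: field_simps)
  finally have Bernoulli: "(x + 1 - real k) / (x + 1) \<le> (x / (x + 1)) ^ k"
    using assms by (simp add: field_simps)
  have "((x + 1) / x) ^ k = 1 / (x / (x + 1)) ^ k" by (simp add: power_divide)
  also have "\<dots> \<le> 1 / ((x + 1 - real k) / (x + 1))"
    using Bernoulli assms by (intro divide_left_mono mult_pos_pos) auto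
  also have "\<dots> = 1 + real k / (x + 1 - real k)"
    using assms by (simp add: field_simps)
  finally show ?thesis .
qed

lemma sum_inverse_power_ge:
  fixes s :: real
  assumes "s < real l" "l \<le> Suc n"
  shows "1 / (real l - s) ^ p - 1 / (real (Suc n) - s) ^ p
           \<le> real p * (\<Sum>j=l..n. 1 / (real j - s) ^ Suc p)"
proof -
  define g where "g j = 1 / (real j - s) ^ p" for j
  have "g l - g (Suc n) = (\<Sum>j=l..n. g j - g (Suc j))"
    by (rule sum_telescope_Suc[OF assms(2), symmetric])
  also have "\<dots> \<le> (\<Sum>j=l..n. real p / (real j - s) ^ Suc p)"
  proof (intro sum_mono)
    fix j assume "j \<in> {l..n}"
    then have "0 < real j - s" using assms by auto
    moreover have "real (Suc j) - s = (real j - s) + 1" by simp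
    ultimately show "g j - g (Suc j) \<le> real p / (real j - s) ^ Suc p"
      unfolding g_def by (metis inverse_power_diff_le)
  qed
  finally show ?thesis by (simp add: g_def sum_distrib_left)
qed

lemma sum_inverse_power_le:
  fixes s :: real
  assumes "s < real l" "l \<le> Suc n"
  shows "real p * (\<Sum>j=l..n. 1 / (real j - s) ^ Suc p)
           \<le> 1 / (real l - s) ^ p + real p / (real l - s) ^ Suc p"
proof -
  define g where "g j = 1 / (real j - s) ^ p + real p / (real j - s) ^ Suc p" for j
  have "(\<Sum>j=l..n. real p / (real j - s) ^ Suc p) \<le> (\<Sum>j=l..n. g j - g (Suc j))"
  proof (intro sum_mono)
    fix j assume "j \<in> {l..n}"
    then have x: "0 < real j - s" using assms by auto
    have shift: "real (Suc j) - s = (real j - s) + 1" by simp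
    have "real p / (real j - s + 1) ^ Suc p \<le> real p / (real j - s) ^ Suc p"
      using x by (intro divide_left_mono power_mono mult_pos_pos) auto
    then show "real p / (real j - s) ^ Suc p \<le> g j - g (Suc j)"
      using inverse_power_diff_ge[OF x, of p] unfolding g_def shift by linarith
  qed
  also have "\<dots> = g l - g (Suc n)"
    using sum_telescope_Suc[OF assms(2)] .
  also have "\<dots> \<le> g l"
  proof -
    have "0 < real (Suc n) - s" using assms by linarith
    then have "0 \<le> g (Suc n)" by (simp add: g_def)
    then show ?thesis by simp
  qed
  finally show ?thesis by (simp add: g_def sum_distrib_left)
qed

lemma sum_weights_ge:
  assumes "2 \<le> k" "k < l" "l \<le> n"
  shows "(real l - real k - ((real l - real k) / (real n - real k)) ^ k * (real n - real k)) / (real k - 1)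
           \<le> (\<Sum>j=l..n. ((real l - real k) / (real j - real k)) ^ k)"
proof -
  define m N where "m = real l - real k" and "N = real n - real k"
  obtain p where p: "k = Suc p" "1 \<le> p" using assms(1) by (cases k) auto
  have m: "0 < m" "m \<le> N" using assms by (auto simp: m_def N_def)
  have "1 / m ^ p - 1 / (N + 1) ^ p \<le> real p * (\<Sum>j=l..n. 1 / (real j - real k) ^ k)"
    using sum_inverse_power_ge[of "real k" l n p] assms p by (simp add: m_def N_def algebra_simps)
  then have "m ^ k * (1 / m ^ p - 1 / (N + 1) ^ p)
               \<le> m ^ k * (real p * (\<Sum>j=l..n. 1 / (real j - real k) ^ k))"
    using m by (intro mult_left_mono) auto
  also have "\<dots> = real p * (\<Sum>j=l..n. (m / (real j - real k)) ^ k)"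
    by (simp add: sum_distrib_left power_divide mult.commute)
  moreover have "m - (m / N) ^ k * N \<le> m ^ k * (1 / m ^ p - 1 / (N + 1) ^ p)"
  proof -
    have "m ^ k / (N + 1) ^ p \<le> m ^ k / N ^ p"
      using m by (intro divide_left_mono power_mono mult_pos_pos) auto
    moreover have "m ^ k / N ^ p = (m / N) ^ k * N" "m ^ k * (1 / m ^ p) = m"
      using m by (simp_all add: p power_divide field_simps)
    ultimately show ?thesis by (simp add: right_diff_distrib)
  qed
  ultimately have "m - (m / N) ^ k * N \<le> real p * (\<Sum>j=l..n. (m / (real j - real k)) ^ k)"
    by linarith
  moreover have "real k - 1 = real p" "0 < real p"
    using p by auto
  ultimately show ?thesis
    unfolding m_def N_def by (simp add: pos_divide_le_eq mult.commute)
qed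

lemma sum_weight_tails_le:
  assumes "1 \<le> k" "k < l" "l \<le> Suc n"
  shows "(\<Sum>j=l..n. (real l - real k) ^ k / (real j - real k) ^ Suc k) \<le> 1 / (real l - real k) + 1 / real k"
proof -
  define m where "m = real l - real k"
  have m: "0 < m" using assms by (simp add: m_def)
  have "real k * (\<Sum>j=l..n. 1 / (real j - real k) ^ Suc k) \<le> 1 / m ^ k + real k / m ^ Suc k"
    using sum_inverse_power_le[of "real k" l n k] assms by (simp add: m_def)
  then have "m ^ k / real k * (real k * (\<Sum>j=l..n. 1 / (real j - real k) ^ Suc k))
               \<le> m ^ k / real k * (1 / m ^ k + real k / m ^ Suc k)"
    using m by (intro mult_left_mono) auto
  moreover have "m ^ k / real k * (1 / m ^ k + real k / m ^ Suc k) = 1 / m + 1 / real k"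
    using m assms by (simp add: field_simps)
  ultimately show ?thesis
    using assms by (simp add: m_def sum_distrib_left)
qed

text \<open>The bracket of the theorem, whose double sum is \<open>exp_partial_sum r ((k - 1) * ln (n / l))\<close>
  by \<open>exp_partial_sum_mult_eq\<close>.\<close>
definition lower_bound :: "nat \<Rightarrow> nat \<Rightarrow> nat \<Rightarrow> nat \<Rightarrow> real" where
  "lower_bound k n r l =
     real r * (real l - real k) / ((real k - 1) * real n)
     - 1 / (real k - 1) * ((real l - real k) / (real n - real k)) ^ k
         * exp_partial_sum r ((real k - 1) * ln (real n / real l))
     - 3 * (real k)\<^sup>2 * real r / ((real k - 1) * real n)"

lemma correction_term_le:
  fixes m N x K S q :: real
  assumes k: "1 \<le> k" "K = real k" and pos: "0 < m" "0 < N" and x: "K * K \<le> x"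
    and q: "0 \<le> q" and S: "0 \<le> S" "S \<le> q * (N / (x + 1)) ^ (k - 1)"
  shows "(m / N) ^ k * (K / (x + 1 - K)) * S / (x + 1 + K) \<le> q * K / N * (m ^ k / x ^ Suc k)"
proof -
  obtain p where p: "k = Suc p" using k by (cases k) auto
  have K: "1 \<le> K" using k by simp
  have "K \<le> K * K"
    using K mult_left_mono[of 1 K K] by simp
  then have x0: "0 < x" and xK: "K < x + 1"
    using x K by linarith+
  have denominators: "x * x * x ^ p \<le> (x + 1 - K) * (x + 1 + K) * (x + 1) ^ p"
  proof (rule mult_mono)
    have "(x + 1 - K) * (x + 1 + K) = x * x + (2 * x + 1 - K * K)"
      by (simp add: algebra_simps)
    then show "x * x \<le> (x + 1 - K) * (x + 1 + K)"
      using x x0 by linarith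
    show "x ^ p \<le> (x + 1) ^ p"
      using x0 by (intro power_mono) auto
  qed (use x0 xK K in auto)
  have "(m / N) ^ k * (K / (x + 1 - K)) * S / (x + 1 + K)
          \<le> (m / N) ^ k * (K / (x + 1 - K)) * (q * (N / (x + 1)) ^ p) / (x + 1 + K)"
    using S p xK K pos x0 by (intro divide_right_mono mult_left_mono) auto
  also have "\<dots> = q * K * m ^ k / (N * ((x + 1 - K) * (x + 1 + K) * (x + 1) ^ p))"
  proof -
    have "(m / N) ^ Suc p * (K / D) * (q * (N / Y) ^ p) / E = q * K * m ^ Suc p / (N * (D * E * Y ^ p))"
      if "D \<noteq> 0" "E \<noteq> 0" "Y \<noteq> 0" for D E Y
      using that pos by (simp add: power_divide field_simps)
    then show ?thesis
      using x0 xK K by (simp add: p)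
  qed
  also have "\<dots> \<le> q * K * m ^ k / (N * (x * x * x ^ p))"
    using denominators pos x0 xK q K by (intro divide_left_mono mult_left_mono mult_pos_pos) auto
  also have "\<dots> = q * K / N * (m ^ k / x ^ Suc k)"
    by (simp add: p)
  finally show ?thesis .
qed

lemma exp_term_le:
  assumes k: "2 \<le> k" and l: "k\<^sup>2 + k \<le> l" "l \<le> j" "j < n"
  shows "((real l - real k) / (real j - real k)) ^ k * ((real j + 1 - real k) / (real n - real k)) ^ k
           * exp_partial_sum r ((real k - 1) * ln (real n / (real j + 1))) / (real j + 1)
         \<le> ((real l - real k) / (real n - real k)) ^ k
             * (exp_partial_sum (Suc r) ((real k - 1) * ln (real n / real j))
                - exp_partial_sum (Suc r) ((real k - 1) * ln (real n / (real j + 1)))) / (real k - 1)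
           + real r * real k / (real n - real k) * ((real l - real k) ^ k / (real j - real k) ^ Suc k)"
proof -
  define K m N x where "K = real k" and "m = real l - K" and "N = real n - K" and "x = real j - K"
  define S E where "S = exp_partial_sum r ((K - 1) * ln (real n / (real j + 1)))"
    and "E = exp_partial_sum (Suc r) ((K - 1) * ln (real n / real j))
             - exp_partial_sum (Suc r) ((K - 1) * ln (real n / (real j + 1)))"
  have K: "2 \<le> K" "K - 1 = real (k - 1)"
    using k by (auto simp: K_def)
  have "K * K + K \<le> real l"
    using l(1) by (simp add: K_def power2_eq_square flip: of_nat_mult of_nat_add)
  moreover have "K \<le> K * K"
    using K mult_left_mono[of 1 K K] by simp
  moreover have "real l \<le> real j" "real j < real n"
    using l by auto
  ultimately have xK: "K * K \<le> x" and mx: "0 < m" and xN: "x < N" and x: "0 < x" "K < x + 1"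
    unfolding m_def x_def N_def using K by linarith+
  have J: "real j + 1 = x + 1 + K"
    by (simp add: x_def)
  have S: "0 \<le> S"
    using l by (auto simp: S_def K intro!: exp_partial_sum_nonneg)
  have "(K - 1) / (real j + 1) * S \<le> E"
    unfolding S_def E_def using exp_partial_sum_ln_step[of "K - 1" j n r] K l k by (simp add: K_def)
  then have S_step: "S / (real j + 1) \<le> E / (K - 1)"
    using K by (simp add: field_simps)
  have "real j + 1 - K = x + 1"
    by (simp add: x_def)
  moreover have "S \<le> real r * ((real n - K) / (real j + 1 - K)) ^ (k - 1)"
    unfolding S_def K(2) using K x l by (intro exp_partial_sum_ln_ratio_le) (auto simp: x_def)
  ultimately have "S \<le> real r * (N / (x + 1)) ^ (k - 1)"
    by (simp only: N_def)
  then have correction: "(m / N) ^ k * (K / (x + 1 - K)) * S / (x + 1 + K) \<le> real r * K / N * (m ^ k / x ^ Suc k)"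
    using correction_term_le[of k K m N x "real r" S] k K xK mx xN x S by (simp add: K_def)
  have "(m / x) ^ k * ((x + 1) / N) ^ k * S / (x + 1 + K) = (m / N) ^ k * ((x + 1) / x) ^ k * (S / (x + 1 + K))"
    by (simp add: power_divide)
  also have "\<dots> \<le> (m / N) ^ k * (1 + K / (x + 1 - K)) * (S / (x + 1 + K))"
    using add_one_div_power_le[of x k] x mx xN S by (intro mult_right_mono mult_left_mono) (auto simp: K_def)
  also have "\<dots> = (m / N) ^ k * (S / (x + 1 + K)) + (m / N) ^ k * (K / (x + 1 - K)) * S / (x + 1 + K)"
    by (simp add: algebra_simps)
  also have "\<dots> \<le> (m / N) ^ k * (E / (K - 1)) + real r * K / N * (m ^ k / x ^ Suc k)"
    using S_step[unfolded J] correction x mx xN by (intro add_mono mult_left_mono) auto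
  finally show ?thesis
    by (simp add: m_def N_def x_def K_def S_def E_def diff_add_eq)
qed

lemma rescaled_lower_bound_eq:
  fixes K J n q w Z :: real
  assumes "K \<noteq> 1" "J \<noteq> 0" "n \<noteq> 0"
  shows "w * ((K - 1) / J * (q * (J - K) / ((K - 1) * n) - 1 / (K - 1) * Z - 3 * K\<^sup>2 * q / ((K - 1) * n)) + 1 / n)
     = (q + 1) * w / n - q * (3 * K\<^sup>2 + K) * (w / J) / n - w * Z / J"
proof -
  have K: "K - 1 \<noteq> 0" using assms by simp
  have "(K - 1) / J * (q * (J - K) / ((K - 1) * n)) = q * (J - K) / (J * n)"
    "(K - 1) / J * (1 / (K - 1) * Z) = Z / J"
    "(K - 1) / J * (3 * K\<^sup>2 * q / ((K - 1) * n)) = 3 * K\<^sup>2 * q / (J * n)"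
    using K assms by (simp_all add: field_simps)
  then have cancel: "(K - 1) / J * (q * (J - K) / ((K - 1) * n) - 1 / (K - 1) * Z - 3 * K\<^sup>2 * q / ((K - 1) * n))
      = q * (J - K) / (J * n) - Z / J - 3 * K\<^sup>2 * q / (J * n)"
    by (simp only: right_diff_distrib)
  have "w * (q * (J - K) / (J * n) - Z / J - 3 * K\<^sup>2 * q / (J * n) + 1 / n)
      = (q + 1) * w / n - q * (3 * K\<^sup>2 + K) * (w / J) / n - w * Z / J"
    using assms by (simp add: field_simps power2_eq_square)
  then show ?thesis
    by (simp only: cancel)
qed

lemma lower_bound_term_le:
  assumes k: "2 \<le> k" and l: "k\<^sup>2 + k \<le> l" "l \<le> j" "j < n"
  shows "real (Suc r) * ((real l - real k) / (real j - real k)) ^ k / real n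
     - real r * ((3 * (real k)\<^sup>2 + real k) / real n + real k / (real n - real k))
         * ((real l - real k) ^ k / (real j - real k) ^ Suc k)
     - ((real l - real k) / (real n - real k)) ^ k
         * (exp_partial_sum (Suc r) ((real k - 1) * ln (real n / real j))
            - exp_partial_sum (Suc r) ((real k - 1) * ln (real n / (real j + 1)))) / (real k - 1)
     \<le> ((real l - real k) / (real j - real k)) ^ k
         * ((real k - 1) / (real j + 1) * lower_bound k n r (j + 1) + 1 / real n)"
proof -
  define K N P where "K = real k" and "N = real n - K" and "P = ((real l - K) / N) ^ k"
  define w T where "w = ((real l - K) / (real j - K)) ^ k" and "T = (real l - K) ^ k / (real j - K) ^ Suc k"
  define E where "E = exp_partial_sum (Suc r) ((K - 1) * ln (real n / real j))
                      - exp_partial_sum (Suc r) ((K - 1) * ln (real n / (real j + 1)))"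
  define Z where "Z = ((real j + 1 - K) / N) ^ k * exp_partial_sum r ((K - 1) * ln (real n / (real j + 1)))"
  have "0 < k\<^sup>2"
    using k by simp
  then have "k < l"
    using l(1) by linarith
  then have K: "2 \<le> K" and n: "0 < real n" and lj: "K < real l" "real l \<le> real j"
    using k l by (simp_all add: K_def)
  have "lower_bound k n r (j + 1)
          = real r * ((real j + 1) - K) / ((K - 1) * real n) - 1 / (K - 1) * Z
              - 3 * K\<^sup>2 * real r / ((K - 1) * real n)"
    by (simp add: lower_bound_def Z_def K_def N_def add.commute)
  then have rhs: "w * ((K - 1) / (real j + 1) * lower_bound k n r (j + 1) + 1 / real n)
      = (real r + 1) * w / real n - real r * (3 * K\<^sup>2 + K) * (w / (real j + 1)) / real n - w * Z / (real j + 1)"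
    using rescaled_lower_bound_eq[of K "real j + 1" "real n"] K n by simp
  have "w / (real j + 1) = (real l - K) ^ k / ((real j - K) ^ k * (real j + 1))"
    by (simp add: w_def power_divide)
  also have "\<dots> \<le> (real l - K) ^ k / ((real j - K) ^ k * (real j - K))"
    using K lj by (intro divide_left_mono mult_left_mono mult_pos_pos) auto
  also have "\<dots> = T"
    by (simp add: T_def mult.commute)
  finally have "w / (real j + 1) \<le> T" .
  moreover have "0 \<le> real r * (3 * K\<^sup>2 + K) / real n"
    using K n by simp
  ultimately have err:
    "real r * (3 * K\<^sup>2 + K) * (w / (real j + 1)) / real n \<le> real r * (3 * K\<^sup>2 + K) / real n * T"
    by (metis mult_left_mono mult.commute times_divide_eq_left)
  have "w * Z / (real j + 1) \<le> P * E / (K - 1) + real r * K / N * T"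
    using exp_term_le[OF k l, of r] by (simp add: w_def Z_def P_def E_def T_def N_def K_def mult.assoc)
  with rhs err have "real (Suc r) * w / real n - real r * ((3 * K\<^sup>2 + K) / real n + K / N) * T - P * E / (K - 1)
      \<le> w * ((K - 1) / (real j + 1) * lower_bound k n r (j + 1) + 1 / real n)"
    by (simp add: algebra_simps add_divide_distrib)
  then show ?thesis
    by (simp add: K_def N_def P_def w_def T_def E_def)
qed

lemma error_budget_poly_le:
  fixes K :: real
  assumes K: "2 \<le> K"
  shows "(3 * K + 1) * (K + 1) / K + (K + 1)\<^sup>2 / K\<^sup>2 + 1 \<le> 3 * K ^ 3 / (K - 1)\<^sup>2"
proof -
  have "K\<^sup>2 \<le> K ^ 3" "K \<le> K ^ 3" "1 \<le> K ^ 3"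
    using K power_increasing[of 2 3 K] power_increasing[of 1 3 K] by simp_all
  then have "((3 * K + 1) * (K + 1) * K + (K + 1)\<^sup>2 + K\<^sup>2) * (K - 1)\<^sup>2 \<le> 3 * K ^ 5"
    by (simp add: algebra_simps power2_eq_square power3_eq_cube power_numeral_reduce)
  then have "((3 * K + 1) * (K + 1) * K + (K + 1)\<^sup>2 + K\<^sup>2) * (K - 1)\<^sup>2 / (K\<^sup>2 * (K - 1)\<^sup>2)
               \<le> 3 * K ^ 5 / (K\<^sup>2 * (K - 1)\<^sup>2)"
    by (intro divide_right_mono) auto
  then have "((3 * K + 1) * (K + 1) * K + (K + 1)\<^sup>2 + K\<^sup>2) / K\<^sup>2
               \<le> 3 * K ^ 5 / (K\<^sup>2 * (K - 1)\<^sup>2)"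
    using K by simp
  moreover have "(3 * K + 1) * (K + 1) / K + (K + 1)\<^sup>2 / K\<^sup>2 + 1
                   = ((3 * K + 1) * (K + 1) * K + (K + 1)\<^sup>2 + K\<^sup>2) / K\<^sup>2"
    using K by (simp add: field_simps power2_eq_square)
  moreover have "3 * K ^ 5 / (K\<^sup>2 * (K - 1)\<^sup>2) = 3 * K ^ 3 / (K - 1)\<^sup>2"
    using K by (simp add: power2_eq_square power3_eq_cube power_numeral_reduce)
  ultimately show ?thesis by simp
qed

lemma error_coefficient_le:
  fixes K m N n T :: real
  assumes K: "2 \<le> K" and m: "K * K \<le> m" and N: "K * K \<le> N" and n: "n = N + K"
    and T: "0 \<le> T" "T \<le> 1 / m + 1 / K"
  shows "((3 * K\<^sup>2 + K) / n + K / N) * T + 1 / n \<le> 3 * K ^ 3 / ((K - 1)\<^sup>2 * n)"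
proof -
  have KK: "0 < K * K"
    using K by simp
  then have pos: "0 < K" "0 < N" "0 < n"
    using K N n by linarith+
  have "1 / m \<le> 1 / (K * K)"
    using m KK by (intro divide_left_mono) auto
  moreover have "1 / (K * K) + 1 / K = (K + 1) / K\<^sup>2"
    using pos by (simp add: field_simps power2_eq_square)
  ultimately have T_le: "T \<le> (K + 1) / K\<^sup>2"
    using T by linarith
  have "(3 * K\<^sup>2 + K) * T \<le> (3 * K\<^sup>2 + K) * ((K + 1) / K\<^sup>2)"
    using T_le pos by (intro mult_left_mono) auto
  also have "\<dots> = (3 * K + 1) * (K + 1) / K"
    using pos by (simp add: field_simps power2_eq_square)
  finally have first: "(3 * K\<^sup>2 + K) * T \<le> (3 * K + 1) * (K + 1) / K" .
  have "n / N \<le> (K + 1) / K"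
    using n N pos by (simp add: field_simps)
  moreover have "K * T \<le> (K + 1) / K"
    using mult_left_mono[OF T_le, of K] pos by (simp add: power2_eq_square)
  ultimately have "n / N * (K * T) \<le> (K + 1) / K * ((K + 1) / K)"
    using pos T by (intro mult_mono) auto
  then have second: "n * (K / N) * T \<le> (K + 1)\<^sup>2 / K\<^sup>2"
    by (simp add: power2_eq_square)
  have "n * (((3 * K\<^sup>2 + K) / n + K / N) * T + 1 / n) = (3 * K\<^sup>2 + K) * T + n * (K / N) * T + 1"
    using pos by (simp add: field_simps)
  also have "\<dots> \<le> 3 * K ^ 3 / (K - 1)\<^sup>2"
    using first second error_budget_poly_le[OF K] by linarith
  finally have scaled: "n * (((3 * K\<^sup>2 + K) / n + K / N) * T + 1 / n) \<le> 3 * K ^ 3 / (K - 1)\<^sup>2" .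
  have "((3 * K\<^sup>2 + K) / n + K / N) * T + 1 / n = n * (((3 * K\<^sup>2 + K) / n + K / N) * T + 1 / n) / n"
    using pos by simp
  also have "\<dots> \<le> 3 * K ^ 3 / (K - 1)\<^sup>2 / n"
    using scaled pos by (intro divide_right_mono) auto
  finally show ?thesis
    by simp
qed

lemma lower_bound_budget:
  fixes K R m N n P T W E :: real
  assumes K: "2 \<le> K" and R: "1 \<le> R" "R \<le> K" and m: "K * K \<le> m" "m \<le> N" and n: "n = N + K"
    and T: "0 \<le> T" "T \<le> 1 / m + 1 / K" and P: "0 \<le> P" "P \<le> 1"
    and W: "(m - P * N) / (K - 1) \<le> W"
  shows "R * m / ((K - 1) * n) - 1 / (K - 1) * P * E - 3 * K\<^sup>2 * R / ((K - 1) * n)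
     \<le> P / n + R / n * (W - P) - (R - 1) * ((3 * K\<^sup>2 + K) / n + K / N) * T - P * (E - R) / (K - 1)"
proof -
  have "0 < K * K"
    using K by simp
  then have pos: "0 < K - 1" "0 < N" "0 < n" "N \<le> n"
    using K m n by linarith+
  have "R * P * N / ((K - 1) * n) \<le> R * P * n / ((K - 1) * n)"
    using pos R P by (intro divide_right_mono mult_left_mono) auto
  also have "\<dots> = R * P / (K - 1)"
    using pos by simp
  finally have "R * m / ((K - 1) * n) - R * P / (K - 1) \<le> R * m / ((K - 1) * n) - R * P * N / ((K - 1) * n)"
    by linarith
  also have "\<dots> = (R * m - R * P * N) / ((K - 1) * n)"
    by (rule diff_divide_distrib[symmetric])
  also have "\<dots> = (R * (m - P * N)) / (n * (K - 1))"
    by (simp add: algebra_simps)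
  also have "\<dots> = R / n * ((m - P * N) / (K - 1))"
    by (rule times_divide_times_eq[symmetric])
  also have "\<dots> \<le> R / n * W"
    using W R pos by (intro mult_left_mono) auto
  finally have main: "R * m / ((K - 1) * n) - R * P / (K - 1) \<le> R / n * W" .
  have "(R - 1) * (((3 * K\<^sup>2 + K) / n + K / N) * T + 1 / n) \<le> (R - 1) * (3 * K ^ 3 / ((K - 1)\<^sup>2 * n))"
    using error_coefficient_le[OF K m(1) _ n T] m R by (intro mult_left_mono) auto
  also have "\<dots> \<le> 3 * K\<^sup>2 * R / ((K - 1) * n)"
  proof -
    have factor: "(R - 1) * K * (3 * K\<^sup>2) \<le> R * (K - 1) * (3 * K\<^sup>2)"
      using R by (intro mult_right_mono) (auto simp: algebra_simps)
    have "(R - 1) * (3 * K ^ 3 / ((K - 1)\<^sup>2 * n)) = (R - 1) * K * (3 * K\<^sup>2) / ((K - 1)\<^sup>2 * n)"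
      unfolding power3_eq_cube power2_eq_square by simp
    also have "\<dots> \<le> R * (K - 1) * (3 * K\<^sup>2) / ((K - 1)\<^sup>2 * n)"
      using factor pos by (intro divide_right_mono) auto
    also have "\<dots> = 3 * K\<^sup>2 * R / ((K - 1) * n)"
      using pos by (simp add: power2_eq_square)
    finally show ?thesis .
  qed
  finally have error: "(R - 1) * (((3 * K\<^sup>2 + K) / n + K / N) * T + 1 / n) \<le> 3 * K\<^sup>2 * R / ((K - 1) * n)" .
  have "(R - 1) * P / n \<le> (R - 1) / n"
    using R P pos by (simp add: divide_right_mono mult_left_le)
  with main error show ?thesis
    by (simp add: algebra_simps diff_divide_distrib add_divide_distrib)
qed

lemma sum_lower_bound_terms_ge:
  assumes k: "2 \<le> k" and l: "k\<^sup>2 + k \<le> l" "l \<le> Suc n'" and n: "n' < n"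
  shows "real (Suc r) / real n * (\<Sum>j=l..n'. ((real l - real k) / (real j - real k)) ^ k)
     - real r * ((3 * (real k)\<^sup>2 + real k) / real n + real k / (real n - real k))
         * (\<Sum>j=l..n'. (real l - real k) ^ k / (real j - real k) ^ Suc k)
     - ((real l - real k) / (real n - real k)) ^ k
         * (exp_partial_sum (Suc r) ((real k - 1) * ln (real n / real l))
            - exp_partial_sum (Suc r) ((real k - 1) * ln (real n / real (Suc n')))) / (real k - 1)
     \<le> (\<Sum>j=l..n'. ((real l - real k) / (real j - real k)) ^ k
           * ((real k - 1) / (real j + 1) * lower_bound k n r (j + 1) + 1 / real n))"
proof -
  define w T E where "w j = ((real l - real k) / (real j - real k)) ^ k"
    and "T j = (real l - real k) ^ k / (real j - real k) ^ Suc k"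
    and "E j = exp_partial_sum (Suc r) ((real k - 1) * ln (real n / real j))" for j
  define C P where "C = real r * ((3 * (real k)\<^sup>2 + real k) / real n + real k / (real n - real k))"
    and "P = ((real l - real k) / (real n - real k)) ^ k"
  have "real (Suc r) / real n * (\<Sum>j=l..n'. w j) - C * (\<Sum>j=l..n'. T j) - P * (E l - E (Suc n')) / (real k - 1)
      = (\<Sum>j=l..n'. real (Suc r) * w j / real n - C * T j - P * (E j - E (Suc j)) / (real k - 1))"
  proof -
    have "(\<Sum>j=l..n'. P * (E j - E (Suc j)) / (real k - 1)) = P * (E l - E (Suc n')) / (real k - 1)"
      unfolding sum_telescope_Suc[OF l(2), symmetric] by (simp only: sum_divide_distrib sum_distrib_left)
    moreover have "(\<Sum>j=l..n'. real (Suc r) * w j / real n) = real (Suc r) / real n * (\<Sum>j=l..n'. w j)"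
      "(\<Sum>j=l..n'. C * T j) = C * (\<Sum>j=l..n'. T j)"
      by (simp_all add: sum_distrib_left)
    ultimately show ?thesis
      by (simp only: sum_subtractf)
  qed
  also have "\<dots> \<le> (\<Sum>j=l..n'. w j * ((real k - 1) / (real j + 1) * lower_bound k n r (j + 1) + 1 / real n))"
  proof (intro sum_mono)
    fix j assume "j \<in> {l..n'}"
    then have "l \<le> j" "j < n" using n by auto
    from lower_bound_term_le[OF k l(1) this, of r] show
      "real (Suc r) * w j / real n - C * T j - P * (E j - E (Suc j)) / (real k - 1)
         \<le> w j * ((real k - 1) / (real j + 1) * lower_bound k n r (j + 1) + 1 / real n)"
      by (simp add: w_def T_def E_def C_def P_def add.commute)
  qed
  finally show ?thesis
    by (simp only: w_def T_def E_def C_def P_def)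
qed

lemma lower_bound_subsolution:
  assumes k: "2 \<le> k" and l: "k\<^sup>2 + k \<le> l" "l \<le> n" and r: "Suc r \<le> k"
  shows "lower_bound k n (Suc r) l
     \<le> (\<Sum>j=l..n. ((real l - real k) / (real j - real k)) ^ k *
           ((real k - 1) / (real j + 1) * (if j < n then lower_bound k n r (j + 1) else 0) + 1 / real n))"
proof -
  define K m N P where "K = real k" and "m = real l - K" and "N = real n - K" and "P = (m / N) ^ k"
  define w T E where "w j = ((real l - real k) / (real j - real k)) ^ k"
    and "T j = (real l - real k) ^ k / (real j - real k) ^ Suc k"
    and "E j = exp_partial_sum (Suc r) ((real k - 1) * ln (real n / real j))" for j
  define f where "f = (\<lambda>j. w j * ((real k - 1) / (real j + 1)
                               * (if j < n then lower_bound k n r (j + 1) else 0) + 1 / real n))"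
  have "0 < k\<^sup>2"
    using k by simp
  then have kl: "k < l" and n: "n = Suc (n - 1)" "l \<le> Suc (n - 1)"
    using l by linarith+
  have K: "2 \<le> K" and "K * K + K \<le> real l"
    using k l(1) by (simp_all add: K_def power2_eq_square flip: of_nat_mult of_nat_add)
  then have m: "K * K \<le> m" "m \<le> N" and KK: "0 < K * K"
    using l by (simp_all add: m_def N_def)
  have split_last: "(\<Sum>j=l..n. g j) = g n + (\<Sum>j=l..n - 1. g j)" for g :: "nat \<Rightarrow> real"
    using sum.nat_ivl_Suc'[OF n(2), of g] n by simp
  have "lower_bound k n (Suc r) l = real (Suc r) * m / ((K - 1) * real n) - 1 / (K - 1) * P * E l
                                       - 3 * K\<^sup>2 * real (Suc r) / ((K - 1) * real n)"
    by (simp add: lower_bound_def E_def P_def m_def N_def K_def)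
  also have "\<dots> \<le> P / real n + real (Suc r) / real n * ((\<Sum>j=l..n. w j) - P)
                   - (real (Suc r) - 1) * ((3 * K\<^sup>2 + K) / real n + K / N) * (\<Sum>j=l..n - 1. T j)
                   - P * (E l - real (Suc r)) / (K - 1)"
  proof (rule lower_bound_budget[OF K _ _ m])
    show "(m - P * N) / (K - 1) \<le> (\<Sum>j=l..n. w j)"
      using sum_weights_ge[OF k kl l(2)] by (simp add: w_def P_def m_def N_def K_def)
    show "(\<Sum>j=l..n - 1. T j) \<le> 1 / m + 1 / K" "0 \<le> (\<Sum>j=l..n - 1. T j)"
      using sum_weight_tails_le[of k l "n - 1"] k kl n by (auto simp: T_def m_def K_def intro!: sum_nonneg)
    show "P \<le> 1" "0 \<le> P"
      using m KK by (auto simp: P_def intro!: power_le_one)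
  qed (use r in \<open>auto simp: N_def K_def\<close>)
  also have "\<dots> \<le> f n + (\<Sum>j=l..n - 1. f j)"
  proof -
    have "E n = real (Suc r)" "f n = P / real n"
      by (simp_all add: E_def f_def w_def P_def m_def N_def K_def)
    moreover have "(\<Sum>j=l..n - 1. f j)
        = (\<Sum>j=l..n - 1. w j * ((real k - 1) / (real j + 1) * lower_bound k n r (j + 1) + 1 / real n))"
      using n by (intro sum.cong) (auto simp: f_def)
    ultimately show ?thesis
      using sum_lower_bound_terms_ge[OF k l(1) n(2), of n r] n
      unfolding split_last[of w]
      by (simp add: w_def T_def E_def P_def m_def N_def K_def)
  qed
  also have "\<dots> = (\<Sum>j=l..n. f j)"
    by (rule split_last[symmetric])
  finally show ?thesis
    by (simp only: f_def w_def)
qed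

lemma lower_bound_le_solution:
  fixes b :: "nat \<Rightarrow> nat \<Rightarrow> real" and c :: real
  assumes k: "2 \<le> k" and c: "0 \<le> c"
    and last: "\<And>r. r \<le> k \<Longrightarrow> b (n + 1) r = 0"
    and zero: "\<And>l. k < l \<Longrightarrow> l \<le> n + 1 \<Longrightarrow> b l 0 = 0"
    and rec: "\<And>l r. k < l \<Longrightarrow> l \<le> n \<Longrightarrow> 1 \<le> r \<Longrightarrow> r \<le> k \<Longrightarrow>
       b l r = (\<Sum>j = l..n. ((real l - real k) / (real j - real k)) ^ k *
                 ((real k - 1) / (real j + 1) * b (j + 1) (r - 1) + c / real n))"
  shows "r \<le> k \<Longrightarrow> k\<^sup>2 + k \<le> l \<Longrightarrow> l \<le> n \<Longrightarrow> lower_bound k n r l * c \<le> b l r"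
proof (induction r arbitrary: l)
  case 0
  have "0 < k\<^sup>2"
    using k by simp
  then have "k < l"
    using "0.prems" by linarith
  then show ?case
    using "0.prems" zero[of l] by (simp add: lower_bound_def exp_partial_sum_def)
next
  case (Suc r)
  have "0 < k\<^sup>2"
    using k by simp
  then have kl: "k < l"
    using Suc.prems by linarith
  have "lower_bound k n (Suc r) l * c
      \<le> (\<Sum>j=l..n. ((real l - real k) / (real j - real k)) ^ k *
           ((real k - 1) / (real j + 1) * (if j < n then lower_bound k n r (j + 1) else 0) + 1 / real n)) * c"
    using lower_bound_subsolution[OF k Suc.prems(2,3,1)] c by (rule mult_right_mono)
  also have "\<dots> = (\<Sum>j=l..n. ((real l - real k) / (real j - real k)) ^ k *
           ((real k - 1) / (real j + 1) * ((if j < n then lower_bound k n r (j + 1) else 0) * c) + c / real n))"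
    unfolding sum_distrib_right by (intro sum.cong refl) (simp add: algebra_simps)
  also have "\<dots> \<le> (\<Sum>j=l..n. ((real l - real k) / (real j - real k)) ^ k *
           ((real k - 1) / (real j + 1) * b (j + 1) r + c / real n))"
  proof (intro sum_mono mult_left_mono add_right_mono)
    fix j assume j: "j \<in> {l..n}"
    show "(if j < n then lower_bound k n r (j + 1) else 0) * c \<le> b (j + 1) r"
      using Suc.IH[of "j + 1"] Suc.prems last[of r] j by (cases "j < n") auto
    show "0 \<le> (real k - 1) / (real j + 1)" "0 \<le> ((real l - real k) / (real j - real k)) ^ k"
      using k kl j by auto
  qed
  also have "\<dots> = b l (Suc r)"
    using rec[OF kl Suc.prems(3) _ Suc.prems(1)] by simp
  finally show ?case .
qed

theorem mainTheorem9:
  fixes k n :: nat and c :: real and b :: "nat \<Rightarrow> nat \<Rightarrow> real"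
  assumes hk: "k \<ge> 2"
    and hc: "c \<ge> 0"
    and hlast: "\<And>r. r \<le> k \<Longrightarrow> b (n + 1) r = 0"
    and hzero: "\<And>l. k < l \<Longrightarrow> l \<le> n + 1 \<Longrightarrow> b l 0 = 0"
    and hrec: "\<And>l r. k < l \<Longrightarrow> l \<le> n \<Longrightarrow> 1 \<le> r \<Longrightarrow> r \<le> k \<Longrightarrow>
       b l r = (\<Sum>j = l..n. ((real l - real k) / (real j - real k)) ^ k *
                 ((real k - 1) / (real j + 1) * b (j + 1) (r - 1) + c / real n))"
  shows "\<forall>l r. k ^ 2 + k \<le> l \<longrightarrow> l \<le> n \<longrightarrow> r \<le> k \<longrightarrow>
     b l r \<ge> (real r * (real l - real k) / ((real k - 1) * real n)
        - 1 / (real k - 1) * ((real l - real k) / (real n - real k)) ^ k *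
          (\<Sum>r'<r. \<Sum>i = 0..r'. (real k - 1) ^ i / fact i * (ln (real n / real l)) ^ i)
        - 3 * (real k)\<^sup>2 * real r / ((real k - 1) * real n)) * c"
  using lower_bound_le_solution[OF hk hc hlast hzero hrec]
  by (simp add: lower_bound_def exp_partial_sum_mult_eq)

end
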